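(* Let $0<n<\omega$, $k\ge2$, let $(C;\leq_0,\ldots,\leq_{n-1})$ be an $n$-preorder, $A:C\to\bar k$, and $F\in\mathcal{F}_k(n)$. Then $A\in\mathcal{C}(F)$ if and only if $T\leq_hF$ for every $T\in\mathcal{T}_k(n)$ with $T\leq_h (C;\leq_0,\ldots,\leq_{n-1},A)$.
   Context: $\bar k=\{0,\dots,k-1\}$. An $n$-preorder is a set $C$ with preorders $\le_0,\dots,\le_{n-1}$ such that $x\le_{i+1}y$ implies $x\equiv_i y$ (where $\equiv_i$ is the equivalence induced by $\le_i$). Its associated $n$-base is $\mathcal C=(\mathcal C_0,\dots,\mathcal C_{n-1})$, $\mathcal C_i$ = the family of $\le_i$-up subsets of $C$. Restricting to an $\equiv_0$-class $[c]_0$ gives the $(n-1)$-preorder $([c]_0;\le_1,\dots,\le_{n-1})$. Forests/trees: a forest is represented as a finite $F\subseteq\omega^+$ closed under nonempty prefixes, ordered by prefix; a tree as a finite prefix-closed $V\subseteq\omega^*$. For a preorder $Q$, $Q$-forests/trees carry labelings into $Q$, and $(P,c)\le_h(P',c')$ iff there is a monotone $\varphi:P\to P'$ with $c(x)\le c'(\varphi(x))$. $\mathcal T_k(0)=\bar k$ (antichain), $\mathcal T_k(m+1)$ = $\mathcal T_k(m)$-trees with $\le_h$; $\mathcal F_k(n)$ is the set of $\mathcal T_k(n-1)$-forests with $\le_h$. $T\le_h(C;\le_0,\dots,\le_{n-1},A)$ for $(T,t)\in\mathcal T_k(n)$ is defined recursively: for $n=1$, there is a monotone $\varphi:T\to(C;\le_0)$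 with $t(\tau)=A(\varphi(\tau))$ for all $\tau$; for $n>1$, there is a monotone $\varphi:T\to(C;\le_0)$ with $t(\tau)\le_h([\varphi(\tau)]_0;\le_1,\dots,\le_{n-1},A|_{[\varphi(\tau)]_0})$ for all $\tau\in T$. Fine hierarchy: for an $n$-base $\mathcal L=(\mathcal L_0,\dots,\mathcal L_{n-1})$ in a set $S$ (families closed under finite $\cup,\cap$, containing $\emptyset,S$) and $(F,c)\in\mathcal F_k(n)$, an $F$-family over $\mathcal L$ is $\{U_\tau\}_{\tau\in F}$ with $U_\tau\in\mathcal L_0$, $U_{\tau i}\subseteq U_\tau$, $\bigcup U_\tau=S$, together with (if $n>1$) for each $\tau$ a $c(\tau)$-family over the $(n-1)$-base $(\{\tilde U_\tau\cap B:B\in\mathcal L_1\},\dots,\{\tilde U_\tau\cap B:B\in\mathcal L_{n-1}\})$ in $\tilde U_\tau$, where $\tilde U_\tau=U_\tau\setminus\bigcup_{\tau i\in F}U_{\tau i}$ (for trees the same definition with $V\subseteq\omega^*$). It determines $A:S\to\bar k$ if: for $n=1$, $A(x)=c(\tau)$ whenever $x\in\tilde U_\tau$; for $n>1$, for every $\tau$, $A|_{\tilde U_\tau}$ is determined by the $c(\tau)$-family attached to $\tau$. $\mathcal C(F)$ is the set of $A:C\to\bar k$ determined by some $F$-family over the $n$-base $\mathcal C$. *)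

theory Defs
  imports Main "HOL-Library.Sublist"
begin

text \<open>Iterated labelled trees: elements of T_k(0) are Base i (i < k);
  elements of T_k(m+1) are Tr V t with V a finite nonempty prefix-closed set
  of words over nat and t labelling V by elements of T_k(m).
  Labels outside V are irrelevant.\<close>
datatype lt = Base nat | Tr "nat list set" "nat list \<Rightarrow> lt"

definition is_tree :: "nat list set \<Rightarrow> bool" where
  "is_tree V \<longleftrightarrow> finite V \<and> V \<noteq> {} \<and> (\<forall>\<tau> \<sigma>. \<tau> @ \<sigma> \<in> V \<longrightarrow> \<tau> \<in> V)"

definition is_forest :: "nat list set \<Rightarrow> bool" where
  "is_forest F \<longleftrightarrow> finite F \<and> [] \<notin> F \<and>
     (\<forall>\<tau> \<sigma>. \<tau> @ \<sigma> \<in> F \<longrightarrow> \<tau> \<noteq> [] \<longrightarrow> \<tau> \<in> F)"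

fun isT :: "nat \<Rightarrow> nat \<Rightarrow> lt \<Rightarrow> bool" where
  "isT k 0 t = (\<exists>i<k. t = Base i)"
| "isT k (Suc m) t = (case t of Base _ \<Rightarrow> False
      | Tr V f \<Rightarrow> is_tree V \<and> (\<forall>\<tau>\<in>V. isT k m (f \<tau>)))"

definition isF :: "nat \<Rightarrow> nat \<Rightarrow> nat list set \<Rightarrow> (nat list \<Rightarrow> lt) \<Rightarrow> bool" where
  "isF k n F c \<longleftrightarrow> is_forest F \<and> (\<forall>\<tau>\<in>F. isT k (n - 1) (c \<tau>))"

definition mono_map :: "nat list set \<Rightarrow> (nat list \<Rightarrow> 'b) \<Rightarrow> ('b \<Rightarrow> 'b \<Rightarrow> bool) \<Rightarrow> bool" where
  "mono_map V \<phi> r \<longleftrightarrow> (\<forall>\<sigma>\<in>V. \<forall>\<tau>\<in>V. prefix \<sigma> \<tau> \<longrightarrow> r (\<phi> \<sigma>) (\<phi> \<tau>))"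

fun hleT :: "nat \<Rightarrow> lt \<Rightarrow> lt \<Rightarrow> bool" where
  "hleT 0 s t = (case (s, t) of (Base i, Base j) \<Rightarrow> i = j | _ \<Rightarrow> False)"
| "hleT (Suc m) s t = (case (s, t) of
      (Tr V f, Tr V' f') \<Rightarrow> (\<exists>\<phi>. (\<forall>x\<in>V. \<phi> x \<in> V') \<and> mono_map V \<phi> prefix \<and>
                                    (\<forall>x\<in>V. hleT m (f x) (f' (\<phi> x))))
    | _ \<Rightarrow> False)"

definition hleTF :: "nat \<Rightarrow> lt \<Rightarrow> nat list set \<Rightarrow> (nat list \<Rightarrow> lt) \<Rightarrow> bool" where
  "hleTF m T F c = (case T of Base _ \<Rightarrow> False
     | Tr V f \<Rightarrow> (\<exists>\<phi>. (\<forall>x\<in>V. \<phi> x \<in> F) \<and> mono_map V \<phi> prefix \<and>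
                       (\<forall>x\<in>V. hleT m (f x) (c (\<phi> x)))))"

definition npreorder :: "nat \<Rightarrow> 'a set \<Rightarrow> (nat \<Rightarrow> 'a \<Rightarrow> 'a \<Rightarrow> bool) \<Rightarrow> bool" where
  "npreorder n C le \<longleftrightarrow>
     (\<forall>i<n. (\<forall>x\<in>C. le i x x) \<and> (\<forall>x\<in>C. \<forall>y\<in>C. \<forall>z\<in>C. le i x y \<longrightarrow> le i y z \<longrightarrow> le i x z)) \<and>
     (\<forall>i. Suc i < n \<longrightarrow> (\<forall>x\<in>C. \<forall>y\<in>C. le (Suc i) x y \<longrightarrow> le i x y \<and> le i y x))"

definition eqcl :: "'a set \<Rightarrow> ('a \<Rightarrow> 'a \<Rightarrow> bool) \<Rightarrow> 'a \<Rightarrow> 'a set" where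
  "eqcl C r x = {y\<in>C. r x y \<and> r y x}"

fun tleC :: "nat \<Rightarrow> lt \<Rightarrow> 'a set \<Rightarrow> (nat \<Rightarrow> 'a \<Rightarrow> 'a \<Rightarrow> bool) \<Rightarrow> ('a \<Rightarrow> nat) \<Rightarrow> bool" where
  "tleC 0 T C le A = False"
| "tleC (Suc m) T C le A = (case T of Base _ \<Rightarrow> False
     | Tr V t \<Rightarrow> (\<exists>\<phi>. (\<forall>\<tau>\<in>V. \<phi> \<tau> \<in> C) \<and> mono_map V \<phi> (le 0) \<and>
          (\<forall>\<tau>\<in>V. if m = 0 then t \<tau> = Base (A (\<phi> \<tau>))
                   else tleC m (t \<tau>) (eqcl C (le 0) (\<phi> \<tau>)) (\<lambda>i. le (Suc i)) A)))"

definition Cbase :: "'a set \<Rightarrow> (nat \<Rightarrow> 'a \<Rightarrow> 'a \<Rightarrow> bool) \<Rightarrow> nat \<Rightarrow> 'a set set" where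
  "Cbase C le i = {U. U \<subseteq> C \<and> (\<forall>x\<in>U. \<forall>y\<in>C. le i x y \<longrightarrow> y \<in> U)}"

definition is_family :: "'a set \<Rightarrow> (nat \<Rightarrow> 'a set set) \<Rightarrow> nat list set \<Rightarrow> (nat list \<Rightarrow> 'a set) \<Rightarrow> bool" where
  "is_family S L P U \<longleftrightarrow> (\<forall>\<tau>\<in>P. U \<tau> \<in> L 0) \<and>
     (\<forall>\<tau> i. \<tau> \<in> P \<longrightarrow> \<tau> @ [i] \<in> P \<longrightarrow> U (\<tau> @ [i]) \<subseteq> U \<tau>) \<and>
     (\<Union>\<tau>\<in>P. U \<tau>) = S"

definition tildeU :: "nat list set \<Rightarrow> (nat list \<Rightarrow> 'a set) \<Rightarrow> nat list \<Rightarrow> 'a set" where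
  "tildeU P U \<tau> = U \<tau> - (\<Union>i\<in>{i. \<tau> @ [i] \<in> P}. U (\<tau> @ [i]))"

fun trnodes :: "lt \<Rightarrow> nat list set" where
  "trnodes (Tr V t) = V" | "trnodes (Base _) = {}"
fun trlabs :: "lt \<Rightarrow> nat list \<Rightarrow> lt" where
  "trlabs (Tr V t) = t" | "trlabs (Base i) = (\<lambda>_. Base i)"

fun determines :: "nat \<Rightarrow> 'a set \<Rightarrow> (nat \<Rightarrow> 'a set set) \<Rightarrow> nat list set \<Rightarrow> (nat list \<Rightarrow> lt)
     \<Rightarrow> ('a \<Rightarrow> nat) \<Rightarrow> bool" where
  "determines 0 S L P c A = False"
| "determines (Suc m) S L P c A = (\<exists>U. is_family S L P U \<and>
     (\<forall>\<tau>\<in>P. if m = 0 then (\<forall>x\<in>tildeU P U \<tau>. c \<tau> = Base (A x))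
             else determines m (tildeU P U \<tau>)
                    (\<lambda>j. (\<lambda>B. tildeU P U \<tau> \<inter> B) ` L (Suc j))
                    (trnodes (c \<tau>)) (trlabs (c \<tau>)) A))"

definition fine_class :: "nat \<Rightarrow> nat \<Rightarrow> 'a set \<Rightarrow> (nat \<Rightarrow> 'a \<Rightarrow> 'a \<Rightarrow> bool)
     \<Rightarrow> nat list set \<Rightarrow> (nat list \<Rightarrow> lt) \<Rightarrow> ('a \<Rightarrow> nat) set" where
  "fine_class n k C le F c = {A. (\<forall>x\<in>C. A x < k) \<and> determines n C (Cbase C le) F c A}"

end

theory Submission
  imports Defs
begin

(* If A is determined by a family (U p), a tree mapped monotonically into (C; <=_0) is pushed
   into F by sending each node to a deepest p whose U p contains its image.  Since the U p are
   <=_0-up-sets, this choice can be made monotone along the tree, and the =_0-class of a point of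
   tildeU p stays inside tildeU p, so the labels compare by induction on n.

   Conversely, let U p consist of the x such that every tree below the <=_0-cone of x maps into the
   part of F above p.  Two such trees are dominated by their join under a common root, so by
   finiteness a single p serves all of them; hence the U p cover C.  At a point x of tildeU p
   every label realizable at x lies below c p: otherwise joining it with a tree below x would push
   that tree above a child of p.  Induction on n, applied to tildeU p with the shifted preorders,
   completes the family. *)

definition subforest :: "nat list set \<Rightarrow> nat list \<Rightarrow> nat list set" where
  "subforest P p = {q \<in> P. prefix p q}"

definition upset :: "'a set \<Rightarrow> ('a \<Rightarrow> 'a \<Rightarrow> bool) \<Rightarrow> 'a \<Rightarrow> 'a set" where
  "upset S r x = {y \<in> S. r x y}"

definition label_below :: "nat \<Rightarrow> 'a set \<Rightarrow> (nat \<Rightarrow> 'a \<Rightarrow> 'a \<Rightarrow> bool) \<Rightarrow> ('a \<Rightarrow> nat)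
    \<Rightarrow> lt \<Rightarrow> 'a \<Rightarrow> bool" where
  "label_below m S le A r x \<longleftrightarrow>
     (if m = 0 then r = Base (A x) else tleC m r (eqcl S (le 0) x) (\<lambda>i. le (Suc i)) A)"

lemma label_below_0 [simp]: "label_below 0 S le A r x \<longleftrightarrow> r = Base (A x)"
  by (simp add: label_below_def)

lemma label_below_Suc [simp]:
  "label_below (Suc m) S le A r x \<longleftrightarrow> tleC (Suc m) r (eqcl S (le 0) x) (\<lambda>i. le (Suc i)) A"
  by (simp add: label_below_def)

lemma tleC_Suc_Base [simp]: "\<not> tleC (Suc m) (Base a) S le A"
  by simp

lemma tleC_Suc_Tr [simp]:
  "tleC (Suc m) (Tr V t) S le A \<longleftrightarrow>
     (\<exists>\<phi>. (\<forall>\<tau>\<in>V. \<phi> \<tau> \<in> S) \<and> mono_map V \<phi> (le 0) \<and> (\<forall>\<tau>\<in>V. label_below m S le A (t \<tau>) (\<phi> \<tau>)))"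
  by (simp add: label_below_def)

declare tleC.simps(2) [simp del]

definition determines_label :: "nat \<Rightarrow> 'a set \<Rightarrow> (nat \<Rightarrow> 'a set set) \<Rightarrow> lt \<Rightarrow> ('a \<Rightarrow> nat) \<Rightarrow> bool"
  where
  "determines_label m S L r A \<longleftrightarrow>
     (if m = 0 then \<forall>x\<in>S. r = Base (A x)
      else determines m S (\<lambda>j. (\<lambda>B. S \<inter> B) ` L (Suc j)) (trnodes r) (trlabs r) A)"

lemma determines_label_0 [simp]: "determines_label 0 S L r A \<longleftrightarrow> (\<forall>x\<in>S. r = Base (A x))"
  by (simp add: determines_label_def)

lemma determines_label_Suc [simp]:
  "determines_label (Suc m) S L (Tr W f) A \<longleftrightarrow>
     determines (Suc m) S (\<lambda>j. (\<lambda>B. S \<inter> B) ` L (Suc j)) W f A"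
  by (simp only: determines_label_def nat.distinct if_False trnodes.simps trlabs.simps)

lemma determines_Suc [simp]:
  "determines (Suc m) S L P c A \<longleftrightarrow>
     (\<exists>U. is_family S L P U \<and> (\<forall>\<tau>\<in>P. determines_label m (tildeU P U \<tau>) L (c \<tau>) A))"
  by (simp add: determines_label_def)

declare determines.simps(2) [simp del]

lemma tree_root: "is_tree V \<Longrightarrow> [] \<in> V"
  unfolding is_tree_def by (metis append_Nil ex_in_conv)

lemma isT_SucE:
  assumes "isT k (Suc m) T"
  obtains V t where "T = Tr V t" "is_tree V" "\<forall>\<tau>\<in>V. isT k m (t \<tau>)"
  using assms by (cases T) auto

lemma hleT_Suc_Tr: "hleT (Suc m) (Tr V t) (Tr W f) \<longleftrightarrow> hleTF m (Tr V t) W f"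
  by (simp add: hleTF_def)

lemma hleTF_mono: "hleTF m T Q c \<Longrightarrow> Q \<subseteq> Q' \<Longrightarrow> hleTF m T Q' c"
  by (auto simp: hleTF_def split: lt.splits)

lemma tleC_mono_set: "tleC m T D le A \<Longrightarrow> D \<subseteq> D' \<Longrightarrow> tleC m T D' le A"
proof (induction m arbitrary: T D D' le)
  case (Suc m)
  obtain V t where T: "T = Tr V t" using Suc.prems(1) by (cases T) auto
  obtain \<phi> where \<phi>D: "\<forall>\<tau>\<in>V. \<phi> \<tau> \<in> D" and \<phi>mono: "mono_map V \<phi> (le 0)"
    and \<phi>lab: "\<forall>\<tau>\<in>V. label_below m D le A (t \<tau>) (\<phi> \<tau>)"
    using Suc.prems(1) T by auto
  have "label_below m D' le A (t \<tau>) (\<phi> \<tau>)" if "\<tau> \<in> V" for \<tau>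
  proof (cases "m = 0")
    case False
    have "eqcl D (le 0) (\<phi> \<tau>) \<subseteq> eqcl D' (le 0) (\<phi> \<tau>)"
      using Suc.prems(2) by (auto simp: eqcl_def)
    with False \<phi>lab that show ?thesis by (auto simp: label_below_def intro: Suc.IH)
  qed (use \<phi>lab that in simp)
  then show ?case using \<phi>D \<phi>mono Suc.prems(2) T by auto
qed simp

section \<open>Mapping trees along a determining family\<close>

text \<open>The recursion runs over reversed words, so that a node is handled after its parent.\<close>

primrec descent_choice :: "('a list \<Rightarrow> 'b list \<Rightarrow> bool) \<Rightarrow> 'a list \<Rightarrow> 'b list" where
  "descent_choice Q [] = (SOME p. Q [] p)"
| "descent_choice Q (a # \<rho>) = (SOME p. prefix (descent_choice Q \<rho>) p \<and> Q (rev (a # \<rho>)) p)"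

lemma monotone_choice:
  fixes Q :: "nat list \<Rightarrow> 'b list \<Rightarrow> bool"
  assumes closed: "\<forall>\<tau> \<sigma>. \<tau> @ \<sigma> \<in> V \<longrightarrow> \<tau> \<in> V"
    and root: "\<exists>p. Q [] p"
    and step: "\<And>\<sigma> a p. \<sigma> @ [a] \<in> V \<Longrightarrow> Q \<sigma> p \<Longrightarrow> \<exists>p'. prefix p p' \<and> Q (\<sigma> @ [a]) p'"
  shows "\<exists>\<psi>. (\<forall>\<sigma>\<in>V. Q \<sigma> (\<psi> \<sigma>)) \<and> mono_map V \<psi> prefix"
proof -
  define \<psi> where "\<psi> \<sigma> = descent_choice Q (rev \<sigma>)" for \<sigma>
  have \<psi>_snoc: "\<psi> (\<sigma> @ [a]) = (SOME p. prefix (\<psi> \<sigma>) p \<and> Q (\<sigma> @ [a]) p)" for \<sigma> a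
    by (simp add: \<psi>_def)
  have Q\<psi>: "Q \<sigma> (\<psi> \<sigma>)" if "\<sigma> \<in> V" for \<sigma>
    using that
  proof (induction \<sigma> rule: rev_induct)
    case Nil
    then show ?case using root by (simp add: \<psi>_def someI_ex)
  next
    case (snoc a \<sigma>)
    then have "\<exists>p. prefix (\<psi> \<sigma>) p \<and> Q (\<sigma> @ [a]) p" using closed step by blast
    then show ?case unfolding \<psi>_snoc by (rule someI2_ex) blast
  qed
  have \<psi>_step: "prefix (\<psi> \<sigma>) (\<psi> (\<sigma> @ [a]))" if "\<sigma> @ [a] \<in> V" for \<sigma> a
  proof -
    have "\<exists>p. prefix (\<psi> \<sigma>) p \<and> Q (\<sigma> @ [a]) p" using that closed step Q\<psi> by blast
    then show ?thesis unfolding \<psi>_snoc by (rule someI2_ex) blast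
  qed
  have "prefix (\<psi> \<sigma>) (\<psi> \<tau>)" if "prefix \<sigma> \<tau>" "\<tau> \<in> V" for \<sigma> \<tau>
    using that
  proof (induction \<tau> rule: rev_induct)
    case (snoc a \<tau>)
    show ?case
    proof (cases "\<sigma> = \<tau> @ [a]")
      case False
      then have "prefix (\<psi> \<sigma>) (\<psi> \<tau>)" using snoc closed by auto
      then show ?thesis using \<psi>_step[OF snoc.prems(2)] by (rule prefix_order.trans)
    qed simp
  qed simp
  then show ?thesis using Q\<psi> unfolding mono_map_def by blast
qed

lemma tildeU_descend:
  assumes "finite P" "p \<in> P" "x \<in> U p"
  shows "\<exists>q\<in>P. prefix p q \<and> x \<in> tildeU P U q"
proof -
  obtain q where q: "q \<in> P" "x \<in> U q" "prefix p q"
    and max: "\<And>q'. q' \<in> P \<Longrightarrow> x \<in> U q' \<Longrightarrow> prefix q q' \<Longrightarrow> q = q'"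
    using prefix_order.finite_has_maximal2[of "{q \<in> P. x \<in> U q}" p] assms by auto
  have "x \<notin> U (q @ [i])" if "q @ [i] \<in> P" for i
    using max[OF that] by force
  then show ?thesis using q by (auto simp: tildeU_def)
qed

lemma eqcl_subset_tildeU:
  assumes up: "\<And>q y z. q \<in> P \<Longrightarrow> y \<in> C \<Longrightarrow> y \<in> U q \<Longrightarrow> z \<in> C \<Longrightarrow> r y z \<Longrightarrow> z \<in> U q"
    and "p \<in> P" "x \<in> C" "x \<in> tildeU P U p"
  shows "eqcl C r x \<subseteq> tildeU P U p"
  using assms unfolding eqcl_def tildeU_def by blast

lemma Cbase_restrict: "B \<in> Cbase C le j \<Longrightarrow> C' \<subseteq> C \<Longrightarrow> C' \<inter> B \<in> Cbase C' le j"
  by (auto simp: Cbase_def)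

lemma hleTF_via_family:
  assumes fam: "is_family S L P U" and fin: "finite P" and CS: "C \<subseteq> S"
    and up: "\<forall>B\<in>L 0. C \<inter> B \<in> Cbase C le 0"
    and V: "is_tree V" and T: "tleC (Suc m) (Tr V t) C le A"
    and node: "\<And>p x \<sigma>. p \<in> P \<Longrightarrow> x \<in> C \<Longrightarrow> x \<in> tildeU P U p \<Longrightarrow> \<sigma> \<in> V \<Longrightarrow>
                 label_below m C le A (t \<sigma>) x \<Longrightarrow> hleT m (t \<sigma>) (c p)"
  shows "hleTF m (Tr V t) P c"
proof -
  obtain \<phi> where \<phi>C: "\<forall>\<tau>\<in>V. \<phi> \<tau> \<in> C" and \<phi>mono: "mono_map V \<phi> (le 0)"
    and \<phi>lab: "\<forall>\<tau>\<in>V. label_below m C le A (t \<tau>) (\<phi> \<tau>)"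
    using T by auto
  have closed: "\<forall>\<tau> \<sigma>. \<tau> @ \<sigma> \<in> V \<longrightarrow> \<tau> \<in> V" using V by (simp add: is_tree_def)
  define Q where "Q \<sigma> p \<longleftrightarrow> p \<in> P \<and> \<phi> \<sigma> \<in> tildeU P U p" for \<sigma> p
  have "\<exists>p. Q [] p"
  proof -
    have "\<phi> [] \<in> S" using \<phi>C tree_root[OF V] CS by blast
    then obtain p where "p \<in> P" "\<phi> [] \<in> U p" using fam by (auto simp: is_family_def)
    then show ?thesis using tildeU_descend[OF fin] by (fastforce simp: Q_def)
  qed
  moreover have "\<exists>p'. prefix p p' \<and> Q (\<sigma> @ [a]) p'" if "\<sigma> @ [a] \<in> V" "Q \<sigma> p" for \<sigma> a p
  proof -
    have \<sigma>V: "\<sigma> \<in> V" using that(1) closed by blast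
    have p: "p \<in> P" "\<phi> \<sigma> \<in> U p" using that(2) by (auto simp: Q_def tildeU_def)
    have "le 0 (\<phi> \<sigma>) (\<phi> (\<sigma> @ [a]))" using \<phi>mono \<sigma>V that(1) by (simp add: mono_map_def)
    moreover have "C \<inter> U p \<in> Cbase C le 0" using up fam p(1) by (auto simp: is_family_def)
    ultimately have \<phi>U: "\<phi> (\<sigma> @ [a]) \<in> U p" using \<phi>C \<sigma>V that(1) p(2) by (auto simp: Cbase_def)
    obtain q where "q \<in> P" "prefix p q" "\<phi> (\<sigma> @ [a]) \<in> tildeU P U q"
      using tildeU_descend[where U = U, OF fin p(1) \<phi>U] by blast
    then show ?thesis by (auto simp: Q_def)
  qed
  ultimately obtain \<psi> where \<psi>Q: "\<forall>\<sigma>\<in>V. Q \<sigma> (\<psi> \<sigma>)" and \<psi>mono: "mono_map V \<psi> prefix"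
    using monotone_choice[OF closed] by blast
  have "\<forall>\<sigma>\<in>V. hleT m (t \<sigma>) (c (\<psi> \<sigma>))" using node \<psi>Q \<phi>C \<phi>lab by (auto simp: Q_def)
  then show ?thesis using \<psi>Q \<psi>mono by (auto simp: hleTF_def Q_def)
qed

lemma determines_imp_hleTF:
  assumes "determines (Suc m) S L P c A" and "finite P" and "\<forall>p\<in>P. isT k m (c p)"
    and "C \<subseteq> S" and "\<forall>j\<le>m. \<forall>B\<in>L j. C \<inter> B \<in> Cbase C le j"
    and "isT k (Suc m) T" and "tleC (Suc m) T C le A"
  shows "hleTF m T P c"
  using assms
proof (induction m arbitrary: S L P c C le T)
  case 0
  obtain U where fam: "is_family S L P U" and lab: "\<forall>p\<in>P. \<forall>x\<in>tildeU P U p. c p = Base (A x)"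
    using "0.prems"(1) by auto
  obtain V t where T: "T = Tr V t" "is_tree V" using "0.prems"(6) by (rule isT_SucE)
  have "\<forall>B\<in>L 0. C \<inter> B \<in> Cbase C le 0" using "0.prems"(5) by blast
  moreover have "hleT 0 (t \<sigma>) (c p)"
    if "p \<in> P" "x \<in> tildeU P U p" "label_below 0 C le A (t \<sigma>) x" for p x \<sigma>
    using that lab by simp
  ultimately show ?case
    unfolding T(1) using hleTF_via_family[OF fam "0.prems"(2,4) _ T(2)] "0.prems"(7) T(1) by blast
next
  case (Suc m)
  obtain U where fam: "is_family S L P U"
    and lab: "\<forall>p\<in>P. determines_label (Suc m) (tildeU P U p) L (c p) A"
    using Suc.prems(1) by auto
  obtain V t where T: "T = Tr V t" "is_tree V" "\<forall>\<sigma>\<in>V. isT k (Suc m) (t \<sigma>)"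
    using Suc.prems(6) by (rule isT_SucE)
  have U_up: "z \<in> U q" if "q \<in> P" "y \<in> C" "y \<in> U q" "z \<in> C" "le 0 y z" for q y z
  proof -
    have "C \<inter> U q \<in> Cbase C le 0" using Suc.prems(5) fam that(1) by (simp add: is_family_def)
    then show ?thesis using that(2-5) by (auto simp: Cbase_def)
  qed
  have "hleT (Suc m) (t \<sigma>) (c p)"
    if p: "p \<in> P" and x: "x \<in> C" "x \<in> tildeU P U p" and \<sigma>: "\<sigma> \<in> V"
      and t\<sigma>: "label_below (Suc m) C le A (t \<sigma>) x" for p x \<sigma>
  proof -
    obtain W f where cp: "c p = Tr W f" "is_tree W" "\<forall>w\<in>W. isT k m (f w)"
      using Suc.prems(3) p by (metis isT_SucE)
    define S' where "S' = tildeU P U p"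
    define C' where "C' = eqcl C (le 0) x"
    have det: "determines (Suc m) S' (\<lambda>j. (\<lambda>B. S' \<inter> B) ` L (Suc j)) W f A"
      using lab p cp(1) unfolding S'_def by (metis determines_label_Suc)
    have C'S': "C' \<subseteq> S'"
      unfolding C'_def S'_def using U_up p x by (rule eqcl_subset_tildeU)
    have up': "\<forall>j\<le>m. \<forall>B\<in>(\<lambda>B. S' \<inter> B) ` L (Suc j). C' \<inter> B \<in> Cbase C' (\<lambda>i. le (Suc i)) j"
    proof (intro allI impI ballI)
      fix j B assume j: "j \<le> m" and "B \<in> (\<lambda>B. S' \<inter> B) ` L (Suc j)"
      then obtain B0 where B0: "B0 \<in> L (Suc j)" "B = S' \<inter> B0" by blast
      have "C' \<subseteq> C" by (auto simp: C'_def eqcl_def)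
      then have "C' \<inter> (C \<inter> B0) \<in> Cbase C' le (Suc j)"
        using Suc.prems(5) j B0(1) by (intro Cbase_restrict) auto
      moreover have "C' \<inter> (C \<inter> B0) = C' \<inter> B" using C'S' \<open>C' \<subseteq> C\<close> B0(2) by blast
      ultimately show "C' \<inter> B \<in> Cbase C' (\<lambda>i. le (Suc i)) j" by (simp add: Cbase_def)
    qed
    obtain V' t' where t': "t \<sigma> = Tr V' t'" using T(3) \<sigma> by (metis isT_SucE)
    have "hleTF m (t \<sigma>) W f"
    proof (rule Suc.IH[OF det _ _ C'S' up'])
      show "finite W" using cp(2) by (simp add: is_tree_def)
      show "\<forall>w\<in>W. isT k m (f w)" by (fact cp(3))
      show "isT k (Suc m) (t \<sigma>)" using T(3) \<sigma> by blast
      show "tleC (Suc m) (t \<sigma>) C' (\<lambda>i. le (Suc i)) A" using t\<sigma> by (simp add: C'_def)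
    qed
    then show ?thesis using cp(1) t' by (simp only: hleT_Suc_Tr)
  qed
  moreover have "\<forall>B\<in>L 0. C \<inter> B \<in> Cbase C le 0" using Suc.prems(5) by blast
  ultimately show ?case
    unfolding T(1) using hleTF_via_family[OF fam Suc.prems(2,4) _ T(2)] Suc.prems(7) T(1) by blast
qed

section \<open>Trees below a cone: points and joins\<close>

lemma npreorder_refl: "npreorder n S le \<Longrightarrow> i < n \<Longrightarrow> x \<in> S \<Longrightarrow> le i x x"
  unfolding npreorder_def by blast

lemma npreorder_transp_on: "npreorder n S le \<Longrightarrow> i < n \<Longrightarrow> transp_on S (le i)"
  unfolding npreorder_def transp_on_def by blast

lemma npreorder_Suc_equiv:
  "npreorder n S le \<Longrightarrow> Suc i < n \<Longrightarrow> x \<in> S \<Longrightarrow> y \<in> S \<Longrightarrow> le (Suc i) x y \<Longrightarrow> le i x y \<and> le i y x"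
  unfolding npreorder_def by blast

lemma npreorder_shift: "npreorder (Suc n) S le \<Longrightarrow> S' \<subseteq> S \<Longrightarrow> npreorder n S' (\<lambda>i. le (Suc i))"
  unfolding npreorder_def by (simp add: subset_iff) (meson Suc_mono)

lemma eqcl_upset:
  assumes "transp_on S r" "x \<in> S" "y \<in> upset S r x"
  shows "eqcl (upset S r x) r y = eqcl S r y"
  using assms transp_onD[OF assms(1) assms(2), of y] by (auto simp: upset_def eqcl_def)

lemma label_below_upset:
  "transp_on S (le 0) \<Longrightarrow> x \<in> S \<Longrightarrow> y \<in> upset S (le 0) x \<Longrightarrow>
     label_below m (upset S (le 0) x) le A r y \<longleftrightarrow> label_below m S le A r y"
  by (simp add: label_below_def eqcl_upset)

lemma tleC_upset_root:
  assumes trans: "transp_on S (le 0)" and T: "tleC (Suc m) (Tr V t) S le A" and root: "[] \<in> V"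
  shows "\<exists>x\<in>S. tleC (Suc m) (Tr V t) (upset S (le 0) x) le A"
proof -
  obtain \<phi> where \<phi>S: "\<forall>\<tau>\<in>V. \<phi> \<tau> \<in> S" and \<phi>mono: "mono_map V \<phi> (le 0)"
    and \<phi>lab: "\<forall>\<tau>\<in>V. label_below m S le A (t \<tau>) (\<phi> \<tau>)"
    using T by auto
  have up: "\<forall>\<tau>\<in>V. \<phi> \<tau> \<in> upset S (le 0) (\<phi> [])"
    using \<phi>S \<phi>mono root by (auto simp: upset_def mono_map_def)
  moreover have "\<forall>\<tau>\<in>V. label_below m (upset S (le 0) (\<phi> [])) le A (t \<tau>) (\<phi> \<tau>)"
    using \<phi>lab up label_below_upset[where le = le, OF trans] \<phi>S root by blast
  ultimately have "tleC (Suc m) (Tr V t) (upset S (le 0) (\<phi> [])) le A"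
    using \<phi>mono by auto
  then show ?thesis using \<phi>S root by blast
qed

definition trees_below :: "nat \<Rightarrow> nat \<Rightarrow> 'a set \<Rightarrow> (nat \<Rightarrow> 'a \<Rightarrow> 'a \<Rightarrow> bool) \<Rightarrow> ('a \<Rightarrow> nat)
    \<Rightarrow> lt set" where
  "trees_below k m S le A = {T. isT k (Suc m) T \<and> tleC (Suc m) T S le A}"

lemma trees_below_mono: "S \<subseteq> S' \<Longrightarrow> trees_below k m S le A \<subseteq> trees_below k m S' le A"
  using tleC_mono_set by (auto simp: trees_below_def)

lemma trees_belowE:
  assumes "T \<in> trees_below k m S le A"
  obtains V t where "T = Tr V t" "[] \<in> V"
proof -
  have "isT k (Suc m) T" using assms by (simp add: trees_below_def)
  then show ?thesis using that tree_root by (metis isT_SucE)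
qed

lemma is_tree_singleton [simp]: "is_tree {[]}"
  by (simp add: is_tree_def)

fun point_tree :: "nat \<Rightarrow> nat \<Rightarrow> lt" where
  "point_tree 0 a = Base a"
| "point_tree (Suc m) a = Tr {[]} (\<lambda>_. point_tree m a)"

lemma isT_point_tree: "a < k \<Longrightarrow> isT k m (point_tree m a)"
  by (induction m) auto

lemma label_below_point_tree:
  "x \<in> S \<Longrightarrow> \<forall>i\<le>m. le i x x \<Longrightarrow> label_below m S le A (point_tree m (A x)) x"
proof (induction m arbitrary: S le)
  case (Suc m)
  have "x \<in> eqcl S (le 0) x" using Suc.prems by (auto simp: eqcl_def)
  moreover have "\<forall>i\<le>m. le (Suc i) x x" using Suc.prems(2) by simp
  ultimately have "label_below m (eqcl S (le 0) x) (\<lambda>i. le (Suc i)) A (point_tree m (A x)) x"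
    by (rule Suc.IH)
  then show ?case using \<open>x \<in> eqcl S (le 0) x\<close> Suc.prems(2)
    by (auto simp: mono_map_def intro!: exI[of _ "\<lambda>_. x"])
qed simp

lemma point_tree_in_trees_below:
  assumes "x \<in> S" "\<forall>i\<le>m. le i x x" "A x < k"
  shows "point_tree (Suc m) (A x) \<in> trees_below k m S le A"
  using assms label_below_point_tree[of x S m le A, OF assms(1,2)] isT_point_tree[OF assms(3)]
  by (auto simp: trees_below_def mono_map_def intro!: exI[of _ "\<lambda>_. x"])

definition join_tree :: "lt \<Rightarrow> lt \<Rightarrow> lt \<Rightarrow> lt" where
  "join_tree r T1 T2 = Tr (insert [] ((#) 0 ` trnodes T1 \<union> (#) 1 ` trnodes T2))
     (\<lambda>\<sigma>. case \<sigma> of [] \<Rightarrow> r | a # \<sigma>' \<Rightarrow> if a = 0 then trlabs T1 \<sigma>' else trlabs T2 \<sigma>')"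

lemma join_tree_Tr:
  "join_tree r (Tr V1 t1) (Tr V2 t2) = Tr (insert [] ((#) 0 ` V1 \<union> (#) 1 ` V2))
     (\<lambda>\<sigma>. case \<sigma> of [] \<Rightarrow> r | a # \<sigma>' \<Rightarrow> if a = 0 then t1 \<sigma>' else t2 \<sigma>')"
  unfolding join_tree_def trnodes.simps trlabs.simps ..

lemma is_tree_join: "is_tree V1 \<Longrightarrow> is_tree V2 \<Longrightarrow> is_tree (insert [] ((#) 0 ` V1 \<union> (#) 1 ` V2))"
  unfolding is_tree_def by (auto simp: append_eq_Cons_conv image_iff)

lemma mono_map_join:
  assumes "mono_map V1 \<phi>1 R" "mono_map V2 \<phi>2 R" "R x x"
    and "\<forall>\<sigma>\<in>V1. R x (\<phi>1 \<sigma>)" "\<forall>\<sigma>\<in>V2. R x (\<phi>2 \<sigma>)"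
  shows "mono_map (insert [] ((#) 0 ` V1 \<union> (#) 1 ` V2))
           (\<lambda>\<sigma>. case \<sigma> of [] \<Rightarrow> x | a # \<sigma>' \<Rightarrow> if a = 0 then \<phi>1 \<sigma>' else \<phi>2 \<sigma>') R"
  using assms unfolding mono_map_def by (auto simp: prefix_Cons)

lemma join_tree_in_trees_below:
  assumes T1: "T1 \<in> trees_below k m D le A" and T2: "T2 \<in> trees_below k m D le A"
    and x: "x \<in> D" "\<forall>y\<in>D. le 0 x y" and r: "isT k m r" "label_below m D le A r x"
  shows "join_tree r T1 T2 \<in> trees_below k m D le A"
proof -
  have "isT k (Suc m) T1" "tleC (Suc m) T1 D le A" using T1 unfolding trees_below_def by blast+
  then obtain V1 t1 \<phi>1 where T1: "T1 = Tr V1 t1" "is_tree V1" "\<forall>\<tau>\<in>V1. isT k m (t1 \<tau>)"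
    and \<phi>1: "\<forall>\<tau>\<in>V1. \<phi>1 \<tau> \<in> D" "mono_map V1 \<phi>1 (le 0)"
      "\<forall>\<tau>\<in>V1. label_below m D le A (t1 \<tau>) (\<phi>1 \<tau>)"
    by (elim isT_SucE) auto
  have "isT k (Suc m) T2" "tleC (Suc m) T2 D le A" using T2 unfolding trees_below_def by blast+
  then obtain V2 t2 \<phi>2 where T2: "T2 = Tr V2 t2" "is_tree V2" "\<forall>\<tau>\<in>V2. isT k m (t2 \<tau>)"
    and \<phi>2: "\<forall>\<tau>\<in>V2. \<phi>2 \<tau> \<in> D" "mono_map V2 \<phi>2 (le 0)"
      "\<forall>\<tau>\<in>V2. label_below m D le A (t2 \<tau>) (\<phi>2 \<tau>)"
    by (elim isT_SucE) auto
  let ?\<phi> = "\<lambda>\<sigma>. case \<sigma> of [] \<Rightarrow> x | a # \<sigma>' \<Rightarrow> if a = 0 then \<phi>1 \<sigma>' else \<phi>2 \<sigma>'"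
  have "mono_map (insert [] ((#) 0 ` V1 \<union> (#) 1 ` V2)) ?\<phi> (le 0)"
    using \<phi>1 \<phi>2 x by (intro mono_map_join) auto
  then show ?thesis
    using T1 T2 \<phi>1 \<phi>2 x r is_tree_join[OF T1(2) T2(2)]
    by (auto simp: trees_below_def join_tree_Tr intro!: exI[of _ ?\<phi>])
qed

lemma hleTF_subforest_root:
  assumes "hleTF m (Tr V t) Q c" and "[] \<in> V"
  shows "\<exists>q\<in>Q. hleT m (t []) (c q) \<and> hleTF m (Tr V t) (subforest Q q) c"
proof -
  obtain \<psi> where \<psi>: "\<forall>x\<in>V. \<psi> x \<in> Q" "mono_map V \<psi> prefix" "\<forall>x\<in>V. hleT m (t x) (c (\<psi> x))"
    using assms(1) by (auto simp: hleTF_def)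
  then have "\<forall>x\<in>V. \<psi> x \<in> subforest Q (\<psi> [])"
    using assms(2) by (auto simp: subforest_def mono_map_def)
  then show ?thesis using \<psi> assms(2) by (auto simp: hleTF_def)
qed

lemma hleTF_reindex:
  assumes "hleTF m (Tr V t) Q c" and "\<forall>\<sigma>\<in>V'. g \<sigma> \<in> V" and "mono_map V' g prefix"
  shows "hleTF m (Tr V' (t \<circ> g)) Q c"
proof -
  obtain \<psi> where \<psi>: "\<forall>x\<in>V. \<psi> x \<in> Q" "mono_map V \<psi> prefix" "\<forall>x\<in>V. hleT m (t x) (c (\<psi> x))"
    using assms(1) by (auto simp: hleTF_def)
  then show ?thesis
    using assms(2,3) by (auto simp: hleTF_def mono_map_def intro!: exI[of _ "\<psi> \<circ> g"])
qed

lemma hleTF_join_tree: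
  assumes "hleTF m (join_tree r (Tr V1 t1) (Tr V2 t2)) Q c"
  shows "\<exists>q\<in>Q. hleT m r (c q) \<and> hleTF m (Tr V1 t1) (subforest Q q) c \<and>
           hleTF m (Tr V2 t2) (subforest Q q) c"
proof -
  let ?V = "insert [] ((#) 0 ` V1 \<union> (#) 1 ` V2)"
    and ?t = "\<lambda>\<sigma>. case \<sigma> of [] \<Rightarrow> r | a # \<sigma>' \<Rightarrow> if a = 0 then t1 \<sigma>' else t2 \<sigma>'"
  obtain q where q: "q \<in> Q" "hleT m r (c q)" "hleTF m (Tr ?V ?t) (subforest Q q) c"
    using hleTF_subforest_root[of m ?V ?t Q c] assms by (auto simp: join_tree_Tr)
  have "hleTF m (Tr V1 (?t \<circ> (#) 0)) (subforest Q q) c"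
    by (rule hleTF_reindex[OF q(3)]) (auto simp: mono_map_def)
  moreover have "hleTF m (Tr V2 (?t \<circ> (#) 1)) (subforest Q q) c"
    by (rule hleTF_reindex[OF q(3)]) (auto simp: mono_map_def)
  moreover have "?t \<circ> (#) 0 = t1" "?t \<circ> (#) 1 = t2" by (simp_all add: fun_eq_iff)
  ultimately show ?thesis using q(1,2) by auto
qed

lemma finite_directed_common:
  assumes "finite I" and "G \<noteq> {}" and "\<forall>T\<in>G. \<exists>i\<in>I. R T i"
    and directed: "\<forall>T1\<in>G. \<forall>T2\<in>G. \<exists>T3\<in>G. \<forall>i. R T3 i \<longrightarrow> R T1 i \<and> R T2 i"
  shows "\<exists>i\<in>I. \<forall>T\<in>G. R T i"
proof -
  define N where "N T = {i \<in> I. R T i}" for T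
  obtain T' where "T' \<in> G" using assms(2) by blast
  then obtain T0 where T0: "T0 \<in> G" and min: "\<forall>T. T \<in> G \<longrightarrow> card (N T0) \<le> card (N T)"
    using ex_has_least_nat[of "\<lambda>T. T \<in> G" T' "\<lambda>T. card (N T)"] by blast
  have "N T0 \<subseteq> N T" if T: "T \<in> G" for T
  proof -
    obtain T3 where "T3 \<in> G" and "\<forall>i. R T3 i \<longrightarrow> R T0 i \<and> R T i"
      using directed[rule_format, OF T0 T] by blast
    then have T3: "N T3 \<subseteq> N T0" "N T3 \<subseteq> N T" by (auto simp: N_def)
    have "finite (N T0)" using assms(1) by (simp add: N_def)
    then have "N T3 = N T0" using card_seteq T3(1) min \<open>T3 \<in> G\<close> by blast
    then show ?thesis using T3(2) by simp
  qed
  moreover obtain i where "i \<in> N T0" using assms(3) T0 by (auto simp: N_def)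
  ultimately show ?thesis by (auto simp: N_def)
qed

lemma trees_below_upset_common:
  assumes np: "npreorder (Suc m) S le" and x: "x \<in> S" "A x < k" and "finite I"
    and "\<forall>T\<in>trees_below k m (upset S (le 0) x) le A. \<exists>i\<in>I. hleTF m T (Q i) c"
  shows "\<exists>i\<in>I. \<forall>T\<in>trees_below k m (upset S (le 0) x) le A. hleTF m T (Q i) c"
proof (rule finite_directed_common[OF \<open>finite I\<close> _ assms(5)])
  let ?G = "trees_below k m (upset S (le 0) x) le A" and ?r = "point_tree m (A x)"
  have refl: "\<forall>i\<le>m. le i x x" using npreorder_refl[OF np _ x(1)] by simp
  have xD: "x \<in> upset S (le 0) x" using refl x(1) by (simp add: upset_def)
  have least: "\<forall>y\<in>upset S (le 0) x. le 0 x y" by (simp add: upset_def)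
  show "?G \<noteq> {}" using point_tree_in_trees_below[of x _ m le A k, OF xD refl x(2)] by blast
  have r: "isT k m ?r" "label_below m (upset S (le 0) x) le A ?r x"
    using isT_point_tree[OF x(2)] label_below_point_tree[of x _ m le A, OF xD refl] by auto
  show "\<forall>T1\<in>?G. \<forall>T2\<in>?G. \<exists>T3\<in>?G. \<forall>i. hleTF m T3 (Q i) c \<longrightarrow> hleTF m T1 (Q i) c \<and> hleTF m T2 (Q i) c"
  proof (intro ballI)
    fix T1 T2 assume T1: "T1 \<in> ?G" and T2: "T2 \<in> ?G"
    obtain V1 t1 V2 t2 where T: "T1 = Tr V1 t1" "T2 = Tr V2 t2"
      using trees_belowE[OF T1] trees_belowE[OF T2] by metis
    have "hleTF m T1 (Q i) c \<and> hleTF m T2 (Q i) c" if "hleTF m (join_tree ?r T1 T2) (Q i) c" for i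
      using hleTF_join_tree[OF that[unfolded T]] T hleTF_mono[of m _ "subforest (Q i) _" c "Q i"]
      by (auto simp: subforest_def)
    then show "\<exists>T3\<in>?G. \<forall>i. hleTF m T3 (Q i) c \<longrightarrow> hleTF m T1 (Q i) c \<and> hleTF m T2 (Q i) c"
      using join_tree_in_trees_below[OF T1 T2 xD least r] by blast
  qed
qed

section \<open>The canonical family\<close>

definition canonical_family :: "nat \<Rightarrow> nat \<Rightarrow> 'a set \<Rightarrow> (nat \<Rightarrow> 'a \<Rightarrow> 'a \<Rightarrow> bool) \<Rightarrow> ('a \<Rightarrow> nat)
    \<Rightarrow> nat list set \<Rightarrow> (nat list \<Rightarrow> lt) \<Rightarrow> nat list \<Rightarrow> 'a set" where
  "canonical_family k m S le A P c p =
     {x \<in> S. \<forall>T\<in>trees_below k m (upset S (le 0) x) le A. hleTF m T (subforest P p) c}"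

lemma subforest_child:
  assumes closed: "\<forall>a b. a @ b \<in> P \<longrightarrow> a \<noteq> [] \<longrightarrow> a \<in> P"
    and "q \<in> subforest P p" and "q \<noteq> p"
  shows "\<exists>i. p @ [i] \<in> P \<and> prefix (p @ [i]) q"
proof -
  obtain zs where zs: "q = p @ zs" using assms(2) by (auto simp: subforest_def prefix_def)
  with assms(3) obtain i \<rho> where q: "q = (p @ [i]) @ \<rho>" by (cases zs) auto
  then have "p @ [i] \<in> P" using closed[rule_format, of "p @ [i]" \<rho>] assms(2) by (auto simp: subforest_def)
  then show ?thesis using q by auto
qed

lemma canonical_family_covers:
  assumes np: "npreorder (Suc m) S le" and x: "x \<in> S" "A x < k" and fin: "finite P"
    and H: "\<forall>T\<in>trees_below k m S le A. hleTF m T P c"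
  shows "\<exists>p\<in>P. x \<in> canonical_family k m S le A P c p"
proof -
  have "\<exists>p\<in>P. hleTF m T (subforest P p) c" if T: "T \<in> trees_below k m (upset S (le 0) x) le A" for T
  proof -
    obtain V t where VT: "T = Tr V t" "[] \<in> V" using T by (rule trees_belowE)
    have "upset S (le 0) x \<subseteq> S" by (auto simp: upset_def)
    then have "T \<in> trees_below k m S le A" using T trees_below_mono by blast
    then show ?thesis using H hleTF_subforest_root VT by blast
  qed
  then show ?thesis using trees_below_upset_common[where A = A and x = x, OF np x fin] x(1) by (auto simp: canonical_family_def)
qed

lemma canonical_family_is_family:
  assumes np: "npreorder (Suc m) S le" and Ak: "\<forall>x\<in>S. A x < k" and fin: "finite P"
    and H: "\<forall>T\<in>trees_below k m S le A. hleTF m T P c"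
  shows "is_family S (Cbase S le) P (canonical_family k m S le A P c)"
proof -
  let ?U = "canonical_family k m S le A P c"
  have "y \<in> ?U p" if x: "x \<in> ?U p" and y: "y \<in> S" "le 0 x y" for p x y
  proof -
    have "x \<in> S" using x by (simp add: canonical_family_def)
    then have "upset S (le 0) y \<subseteq> upset S (le 0) x"
      using y transp_onD[OF npreorder_transp_on[OF np, of 0] \<open>x \<in> S\<close> y(1)]
      by (auto simp: upset_def)
    then have "trees_below k m (upset S (le 0) y) le A \<subseteq> trees_below k m (upset S (le 0) x) le A"
      by (rule trees_below_mono)
    then show ?thesis using x y(1) unfolding canonical_family_def by blast
  qed
  then have "\<forall>p\<in>P. ?U p \<in> Cbase S le 0" by (auto simp: Cbase_def canonical_family_def)
  moreover have "?U (p @ [i]) \<subseteq> ?U p" for p i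
  proof -
    have "subforest P (p @ [i]) \<subseteq> subforest P p"
      using prefix_order.trans[of p "p @ [i]"] by (auto simp: subforest_def)
    then show ?thesis using hleTF_mono unfolding canonical_family_def by blast
  qed
  moreover have "S \<subseteq> (\<Union>p\<in>P. ?U p)" using canonical_family_covers[OF np _ _ fin H] Ak by blast
  then have "(\<Union>p\<in>P. ?U p) = S" by (auto simp: canonical_family_def)
  ultimately show ?thesis unfolding is_family_def by blast
qed

lemma canonical_family_label:
  assumes np: "npreorder (Suc m) S le" and Ak: "\<forall>x\<in>S. A x < k" and fin: "finite P"
    and closed: "\<forall>a b. a @ b \<in> P \<longrightarrow> a \<noteq> [] \<longrightarrow> a \<in> P"
    and x: "x \<in> tildeU P (canonical_family k m S le A P c) p"
    and r: "isT k m r" "label_below m S le A r x"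
  shows "hleT m r (c p)"
proof (rule ccontr)
  assume not_le: "\<not> hleT m r (c p)"
  let ?G = "trees_below k m (upset S (le 0) x) le A"
  have xS: "x \<in> S" and x_p: "\<forall>T\<in>?G. hleTF m T (subforest P p) c"
    using x by (auto simp: tildeU_def canonical_family_def)
  have children: "\<forall>T\<in>?G. \<exists>i\<in>{i. p @ [i] \<in> P}. hleTF m T (subforest P (p @ [i])) c"
  proof
    fix T assume T: "T \<in> ?G"
    obtain V t where VT: "T = Tr V t" using T by (rule trees_belowE)
    have "le 0 x x" using npreorder_refl[OF np _ xS] by simp
    then have "join_tree r T T \<in> ?G"
      using join_tree_in_trees_below[OF T T] r label_below_upset[where le = le] xS
        npreorder_transp_on[OF np] by (auto simp: upset_def)
    then obtain q where q: "q \<in> subforest P p" "hleT m r (c q)"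
      "hleTF m T (subforest (subforest P p) q) c"
      using x_p hleTF_join_tree VT by blast
    obtain i where i: "p @ [i] \<in> P" "prefix (p @ [i]) q"
      using subforest_child[OF closed q(1)] q(2) not_le by blast
    then have "subforest (subforest P p) q \<subseteq> subforest P (p @ [i])"
      by (auto simp: subforest_def intro: prefix_order.trans)
    then show "\<exists>i\<in>{i. p @ [i] \<in> P}. hleTF m T (subforest P (p @ [i])) c"
      using q(3) i(1) hleTF_mono by blast
  qed
  have "finite {i. p @ [i] \<in> P}"
    using finite_vimageI[OF fin, of "\<lambda>i. p @ [i]"] by (simp add: inj_def vimage_def)
  moreover have "A x < k" using Ak xS by blast
  ultimately obtain i where "p @ [i] \<in> P" "\<forall>T\<in>?G. hleTF m T (subforest P (p @ [i])) c"
    using trees_below_upset_common[OF np xS _ _ children] by blast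
  then show False using x xS by (auto simp: tildeU_def canonical_family_def)
qed

lemma canonical_family_restrict:
  assumes np: "npreorder (Suc (Suc m)) S le" and Ak: "\<forall>x\<in>S. A x < k" and fin: "finite P"
    and closed: "\<forall>a b. a @ b \<in> P \<longrightarrow> a \<noteq> [] \<longrightarrow> a \<in> P" and cp: "c p = Tr W f"
    and T: "T \<in> trees_below k m (tildeU P (canonical_family k (Suc m) S le A P c) p) (\<lambda>i. le (Suc i)) A"
  shows "hleTF m T W f"
proof -
  let ?S' = "tildeU P (canonical_family k (Suc m) S le A P c) p"
  have S'S: "?S' \<subseteq> S" by (auto simp: tildeU_def canonical_family_def)
  obtain V t where VT: "T = Tr V t" "[] \<in> V" using T by (rule trees_belowE)
  have "transp_on ?S' (le (Suc 0))"
    using npreorder_transp_on[OF np, of "Suc 0"] S'S by (auto simp: transp_on_def)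
  moreover have "tleC (Suc m) (Tr V t) ?S' (\<lambda>i. le (Suc i)) A"
    using T VT(1) unfolding trees_below_def by blast
  ultimately obtain x where x: "x \<in> ?S'"
    and Tx: "tleC (Suc m) T (upset ?S' (le (Suc 0)) x) (\<lambda>i. le (Suc i)) A"
    using tleC_upset_root[where le = "\<lambda>i. le (Suc i)", OF _ _ VT(2)] VT(1) by blast
  have "upset ?S' (le (Suc 0)) x \<subseteq> eqcl S (le 0) x"
    using npreorder_Suc_equiv[OF np, of 0 x] x S'S by (auto simp: upset_def eqcl_def)
  then have "label_below (Suc m) S le A T x" using Tx tleC_mono_set by simp
  moreover have "isT k (Suc m) T" using T by (simp add: trees_below_def)
  ultimately have "hleT (Suc m) T (c p)" using canonical_family_label[OF np Ak fin closed x] by blast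
  then show ?thesis using cp VT(1) by (simp only: hleT_Suc_Tr)
qed

lemma Cbase_shift:
  assumes np: "npreorder (Suc m) S le" and S'S: "S' \<subseteq> S" and j: "Suc j < Suc m"
  shows "Cbase S' (\<lambda>i. le (Suc i)) j \<subseteq> (\<lambda>B. S' \<inter> B) ` Cbase S le (Suc j)"
proof
  fix W assume "W \<in> Cbase S' (\<lambda>i. le (Suc i)) j"
  then have WS': "W \<subseteq> S'" and W_up: "\<forall>x\<in>W. \<forall>y\<in>S'. le (Suc j) x y \<longrightarrow> y \<in> W"
    by (auto simp: Cbase_def)
  define B where "B = {y \<in> S. \<exists>w\<in>W. le (Suc j) w y}"
  have "B \<in> Cbase S le (Suc j)"
    unfolding Cbase_def
  proof (intro CollectI conjI ballI impI)
    show "B \<subseteq> S" by (auto simp: B_def)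
    fix x y assume x: "x \<in> B" and y: "y \<in> S" "le (Suc j) x y"
    then obtain w where w: "w \<in> W" "le (Suc j) w x" "x \<in> S" by (auto simp: B_def)
    then have "le (Suc j) w y"
      using transp_onD[OF npreorder_transp_on[OF np j]] y WS' S'S by blast
    then show "y \<in> B" using w(1) y(1) by (auto simp: B_def)
  qed
  moreover have "W \<subseteq> B"
  proof
    fix w assume w: "w \<in> W"
    then have "w \<in> S" using WS' S'S by blast
    then show "w \<in> B" using w npreorder_refl[OF np j] by (auto simp: B_def)
  qed
  then have "S' \<inter> B = W" using W_up WS' by (auto simp: B_def)
  ultimately show "W \<in> (\<lambda>B. S' \<inter> B) ` Cbase S le (Suc j)" by blast
qed

lemma determines_mono:
  "determines m S L P c A \<Longrightarrow> \<forall>j<m. L j \<subseteq> L' j \<Longrightarrow> determines m S L' P c A"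
proof (induction m arbitrary: S L L' P c)
  case (Suc m)
  obtain U where fam: "is_family S L P U" and lab: "\<forall>\<tau>\<in>P. determines_label m (tildeU P U \<tau>) L (c \<tau>) A"
    using Suc.prems(1) by auto
  have "determines_label m S' L' r A" if "determines_label m S' L r A" for S' r
  proof (cases "m = 0")
    case False
    then have "determines m S' (\<lambda>j. (\<lambda>B. S' \<inter> B) ` L (Suc j)) (trnodes r) (trlabs r) A"
      using that by (simp add: determines_label_def)
    then have "determines m S' (\<lambda>j. (\<lambda>B. S' \<inter> B) ` L' (Suc j)) (trnodes r) (trlabs r) A"
      by (rule Suc.IH) (use Suc.prems(2) in auto)
    then show ?thesis using False by (simp add: determines_label_def)
  qed (use that in simp)
  moreover have "is_family S L' P U" using fam Suc.prems(2) by (auto simp: is_family_def)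
  ultimately show ?case using lab by auto
qed simp

lemma hleTF_imp_determines:
  assumes "npreorder (Suc m) S le" and "\<forall>x\<in>S. A x < k" and "finite P"
    and "\<forall>a b. a @ b \<in> P \<longrightarrow> a \<noteq> [] \<longrightarrow> a \<in> P" and "\<forall>p\<in>P. isT k m (c p)"
    and "\<forall>T\<in>trees_below k m S le A. hleTF m T P c"
  shows "determines (Suc m) S (Cbase S le) P c A"
  using assms
proof (induction m arbitrary: S le P c)
  case 0
  let ?U = "canonical_family k 0 S le A P c"
  have "c p = Base (A x)" if "p \<in> P" "x \<in> tildeU P ?U p" for p x
  proof -
    have "x \<in> S" using that(2) by (auto simp: tildeU_def canonical_family_def)
    then have "hleT 0 (Base (A x)) (c p)"
      using canonical_family_label[OF "0.prems"(1-4) that(2)] "0.prems"(2) by simp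
    then show ?thesis by (cases "c p") auto
  qed
  then show ?case using canonical_family_is_family[OF "0.prems"(1-3,6)] by auto
next
  case (Suc m)
  let ?U = "canonical_family k (Suc m) S le A P c"
  have "determines_label (Suc m) (tildeU P ?U p) (Cbase S le) (c p) A" if p: "p \<in> P" for p
  proof -
    let ?S' = "tildeU P ?U p" and ?le' = "\<lambda>i. le (Suc i)"
    obtain W f where cp: "c p = Tr W f" "is_tree W" "\<forall>w\<in>W. isT k m (f w)"
      using Suc.prems(5) p by (metis isT_SucE)
    have S'S: "?S' \<subseteq> S" by (auto simp: tildeU_def canonical_family_def)
    have "determines (Suc m) ?S' (Cbase ?S' ?le') W f A"
    proof (rule Suc.IH)
      show "npreorder (Suc m) ?S' ?le'" by (rule npreorder_shift[OF Suc.prems(1) S'S])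
      show "\<forall>x\<in>?S'. A x < k" using Suc.prems(2) S'S by blast
      show "finite W" "\<forall>a b. a @ b \<in> W \<longrightarrow> a \<noteq> [] \<longrightarrow> a \<in> W"
        using cp(2) by (auto simp: is_tree_def)
      show "\<forall>w\<in>W. isT k m (f w)" by (fact cp(3))
      show "\<forall>T\<in>trees_below k m ?S' ?le' A. hleTF m T W f"
        using canonical_family_restrict[where c = c and p = p, OF Suc.prems(1-4) cp(1)] by blast
    qed
    moreover have "\<forall>j<Suc m. Cbase ?S' ?le' j \<subseteq> (\<lambda>B. ?S' \<inter> B) ` Cbase S le (Suc j)"
      using Cbase_shift[OF Suc.prems(1) S'S] by blast
    ultimately have "determines (Suc m) ?S' (\<lambda>j. (\<lambda>B. ?S' \<inter> B) ` Cbase S le (Suc j)) W f A"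
      by (rule determines_mono)
    then show ?thesis using cp(1) by (simp only: determines_label_Suc)
  qed
  then show ?case using canonical_family_is_family[OF Suc.prems(1-3,6)] by auto
qed

theorem theorem3p8:
  fixes n k :: nat and C :: "'a set" and le :: "nat \<Rightarrow> 'a \<Rightarrow> 'a \<Rightarrow> bool"
    and A :: "'a \<Rightarrow> nat" and F :: "nat list set" and c :: "nat list \<Rightarrow> lt"
  assumes "0 < n" and "2 \<le> k" and "npreorder n C le"
    and "\<forall>x\<in>C. A x < k" and "isF k n F c"
  shows "A \<in> fine_class n k C le F c \<longleftrightarrow>
         (\<forall>T. isT k n T \<and> tleC n T C le A \<longrightarrow> hleTF (n - 1) T F c)"
proof -
  obtain m where n: "n = Suc m" using assms(1) by (cases n) auto
  have F: "finite F" "\<forall>a b. a @ b \<in> F \<longrightarrow> a \<noteq> [] \<longrightarrow> a \<in> F" "\<forall>p\<in>F. isT k m (c p)"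
    using assms(5) n by (auto simp: isF_def is_forest_def)
  have up: "\<forall>j\<le>m. \<forall>B\<in>Cbase C le j. C \<inter> B \<in> Cbase C le j"
    by (auto simp: Cbase_def Int_absorb1)
  have "A \<in> fine_class n k C le F c \<longleftrightarrow> determines (Suc m) C (Cbase C le) F c A"
    using assms(4) n by (simp add: fine_class_def del: determines_Suc)
  also have "\<dots> \<longleftrightarrow> (\<forall>T\<in>trees_below k m C le A. hleTF m T F c)"
    using determines_imp_hleTF[OF _ F(1,3) subset_refl up]
      hleTF_imp_determines[OF assms(3)[unfolded n] assms(4) F] by (auto simp: trees_below_def)
  finally show ?thesis using n by (auto simp: trees_below_def)
qed

end
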